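(* For every integer $k\ge 2$, the class $\mathcal{G}_k$ is closed under taking minors (edge deletions and edge contractions).
   Context: For $n\ge 1$ let $E_n$ be the edge set of $K_n$ and $\mathrm{CUT}_n\subseteq\mathbb{R}^{E_n}$ the cut polytope, i.e. $\mathrm{conv}\{(x_ix_j)_{ij\in E_n}: x\in\{\pm1\}^n\}$. The support graph of a linear inequality $w^Tx\le\alpha$ on $\mathbb{R}^{E_n}$ is $H=(W,F)$ with $F=\{ij: w_{ij}\ne0\}$ and $W$ the set of nodes covered by $F$; the inequality is supported by at most $k$ points if $|W|\le k$. Let $\mathcal{R}_k(K_n)\subseteq\mathbb{R}^{E_n}$ be the polyhedron defined by all inequalities valid for $\mathrm{CUT}_n$ that are supported by at most $k$ points. For a graph $G=([n],E)$, let $\mathrm{CUT}(G)=\pi_E(\mathrm{CUT}_n)$ and $\mathcal{R}_k(G)=\pi_E(\mathcal{R}_k(K_n))$, where $\pi_E$ is the coordinate projection onto $\mathbb{R}^E$. $\mathcal{G}_k$ is the class of all graphs $G$ with $\mathrm{CUT}(G)=\mathcal{R}_k(G)$. *)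

theory Defs
  imports Complex_Main
begin

text \<open>Vertices of K_n are 0,...,n-1; edges are 2-element subsets.
  A point of R^{E} is represented by a function from edges to reals which is
  zero outside E.\<close>

definition edges :: "nat \<Rightarrow> nat set set" where
  "edges n = {{i, j} | i j. i < n \<and> j < n \<and> i \<noteq> j}"

text \<open>Sign vectors x in {+1,-1}^n (normalised to 1 outside [n], so the set is finite).\<close>
definition signs :: "nat \<Rightarrow> (nat \<Rightarrow> real) set" where
  "signs n = {x. \<forall>i. (i < n \<longrightarrow> x i \<in> {-1, 1}) \<and> (n \<le> i \<longrightarrow> x i = 1)}"

definition cut_vec :: "nat \<Rightarrow> (nat \<Rightarrow> real) \<Rightarrow> nat set \<Rightarrow> real" where
  "cut_vec n x = (\<lambda>e. if e \<in> edges n then (\<Prod>i\<in>e. x i) else 0)"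

definition CUT :: "nat \<Rightarrow> (nat set \<Rightarrow> real) set" where
  "CUT n = {y. \<exists>\<mu> :: (nat \<Rightarrow> real) \<Rightarrow> real.
              (\<forall>x\<in>signs n. 0 \<le> \<mu> x) \<and> (\<Sum>x\<in>signs n. \<mu> x) = 1 \<and>
              y = (\<lambda>e. \<Sum>x\<in>signs n. \<mu> x * cut_vec n x e)}"

definition lin :: "nat \<Rightarrow> (nat set \<Rightarrow> real) \<Rightarrow> (nat set \<Rightarrow> real) \<Rightarrow> real" where
  "lin n w y = (\<Sum>e\<in>edges n. w e * y e)"

definition support_nodes :: "nat \<Rightarrow> (nat set \<Rightarrow> real) \<Rightarrow> nat set" where
  "support_nodes n w = \<Union> {e \<in> edges n. w e \<noteq> 0}"

definition valid_CUT :: "nat \<Rightarrow> (nat set \<Rightarrow> real) \<Rightarrow> real \<Rightarrow> bool" where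
  "valid_CUT n w \<alpha> \<longleftrightarrow> (\<forall>y\<in>CUT n. lin n w y \<le> \<alpha>)"

definition Rk :: "nat \<Rightarrow> nat \<Rightarrow> (nat set \<Rightarrow> real) set" where
  "Rk k n = {y. (\<forall>e. e \<notin> edges n \<longrightarrow> y e = 0) \<and>
     (\<forall>w \<alpha>. valid_CUT n w \<alpha> \<and> card (support_nodes n w) \<le> k \<longrightarrow> lin n w y \<le> \<alpha>)}"

definition proj :: "nat set set \<Rightarrow> (nat set \<Rightarrow> real) \<Rightarrow> nat set \<Rightarrow> real" where
  "proj E y = (\<lambda>e. if e \<in> E then y e else 0)"

definition in_Gk :: "nat \<Rightarrow> nat \<Rightarrow> nat set set \<Rightarrow> bool" where
  "in_Gk k n E \<longleftrightarrow> E \<subseteq> edges n \<and> proj E ` CUT n = proj E ` Rk k n"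

definition connected_in :: "nat set set \<Rightarrow> nat set \<Rightarrow> bool" where
  "connected_in E S \<longleftrightarrow>
     (\<forall>a\<in>S. \<forall>b\<in>S. (\<lambda>u v. u \<in> S \<and> v \<in> S \<and> {u, v} \<in> E)\<^sup>*\<^sup>* a b)"

definition is_minor :: "nat \<Rightarrow> nat set set \<Rightarrow> nat \<Rightarrow> nat set set \<Rightarrow> bool" where
  "is_minor m F n E \<longleftrightarrow> (\<exists>V :: nat \<Rightarrow> nat set.
      (\<forall>i<m. V i \<noteq> {} \<and> V i \<subseteq> {0..<n} \<and> connected_in E (V i)) \<and>
      (\<forall>i<m. \<forall>j<m. i \<noteq> j \<longrightarrow> V i \<inter> V j = {}) \<and>
      (\<forall>i<m. \<forall>j<m. {i, j} \<in> F \<longrightarrow> (\<exists>a\<in>V i. \<exists>b\<in>V j. {a, b} \<in> E)))"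

end

theory Submission
  imports Defs "HOL-Library.FuncSet"
begin

text \<open>Let \<open>\<phi>\<close> map every vertex of G to the index of its branch set. Any valid inequality for
  CUT of the minor H pulls back along \<open>\<phi>\<close> to a valid inequality for CUT of K_n whose support
  is no larger, so a point y of R_k(H) lifts to a point of R_k(K_n) that equals 1 on contracted
  edges and y(\<phi> e) elsewhere. Since G is in the class, the lift agrees on E with a convex
  combination of cuts; value 1 on the edges inside a connected branch set forces every cut in
  that combination to be constant on the branch set, so the combination descends to a point of
  CUT(H) that agrees with y on F.\<close>

lemma signs_values: "x \<in> signs n \<Longrightarrow> x i \<in> {-1, 1}"
  unfolding signs_def by (cases "i < n") auto

lemma signs_square: "x \<in> signs n \<Longrightarrow> x i * x i = 1"
  using signs_values[of x n i] by auto

lemma finite_signs: "finite (signs n)"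
proof -
  let ?ext = "\<lambda>g i. if i < n then g i else 1"
  have "signs n \<subseteq> ?ext ` (PiE {..<n} (\<lambda>_. {-1, 1::real}))"
  proof
    fix x assume x: "x \<in> signs n"
    then have "restrict x {..<n} \<in> PiE {..<n} (\<lambda>_. {-1, 1::real})" and "x = ?ext (restrict x {..<n})"
      unfolding signs_def by (auto simp: fun_eq_iff)
    then show "x \<in> ?ext ` (PiE {..<n} (\<lambda>_. {-1, 1::real}))" by blast
  qed
  then show ?thesis by (rule finite_subset) (intro finite_imageI finite_PiE; simp)
qed

lemma edges_subset: "edges n \<subseteq> Pow {0..<n}"
  unfolding edges_def by auto

lemma finite_edges: "finite (edges n)"
  using edges_subset by (rule finite_subset) simp

lemma edgesE:
  assumes "e \<in> edges n"
  obtains a b where "e = {a, b}" "a \<noteq> b" "a < n" "b < n"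
  using assms unfolding edges_def by auto

lemma edgesI: "a < n \<Longrightarrow> b < n \<Longrightarrow> a \<noteq> b \<Longrightarrow> {a, b} \<in> edges n"
  unfolding edges_def by auto

lemma cut_vec_doubleton:
  assumes "{a, b} \<in> edges n"
  shows "cut_vec n x {a, b} = x a * x b"
proof -
  have "a \<noteq> b" using assms by (auto elim!: edgesE simp: doubleton_eq_iff)
  then show ?thesis using assms unfolding cut_vec_def by simp
qed

lemma finite_support_nodes: "finite (support_nodes n w)"
proof -
  have "support_nodes n w \<subseteq> {0..<n}" using edges_subset unfolding support_nodes_def by auto
  then show ?thesis by (rule finite_subset) simp
qed

definition sign_distr :: "nat \<Rightarrow> ((nat \<Rightarrow> real) \<Rightarrow> real) \<Rightarrow> bool" where
  "sign_distr n \<mu> \<longleftrightarrow> (\<forall>x\<in>signs n. 0 \<le> \<mu> x) \<and> (\<Sum>x\<in>signs n. \<mu> x) = 1"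

lemma CUT_iff: "y \<in> CUT n \<longleftrightarrow> (\<exists>\<mu>. sign_distr n \<mu> \<and> y = (\<lambda>e. \<Sum>x\<in>signs n. \<mu> x * cut_vec n x e))"
  unfolding CUT_def sign_distr_def by blast

lemma cut_vec_in_CUT:
  assumes "x \<in> signs n"
  shows "cut_vec n x \<in> CUT n"
proof -
  let ?\<mu> = "\<lambda>x'. if x' = x then 1 else (0::real)"
  have "sign_distr n ?\<mu>"
    using assms finite_signs unfolding sign_distr_def by (simp add: sum.delta)
  moreover have "(\<Sum>x'\<in>signs n. ?\<mu> x' * cut_vec n x' e) = cut_vec n x e" for e
  proof -
    have "(\<Sum>x'\<in>signs n. ?\<mu> x' * cut_vec n x' e) = (\<Sum>x'\<in>signs n. if x' = x then cut_vec n x' e else 0)"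
      by (intro sum.cong) auto
    then show ?thesis using assms finite_signs by (simp add: sum.delta)
  qed
  then have "cut_vec n x = (\<lambda>e. \<Sum>x'\<in>signs n. ?\<mu> x' * cut_vec n x' e)" by simp
  ultimately show ?thesis unfolding CUT_iff by blast
qed

lemma lin_sum_scaled:
  "lin n w (\<lambda>e. \<Sum>x\<in>S. \<mu> x * c x e) = (\<Sum>x\<in>S. \<mu> x * lin n w (c x))"
  unfolding lin_def by (simp add: sum_distrib_left mult_ac sum.swap[of _ S])

lemma valid_CUT_iff_cut_vecs: "valid_CUT n w \<alpha> \<longleftrightarrow> (\<forall>x\<in>signs n. lin n w (cut_vec n x) \<le> \<alpha>)"
proof
  assume "valid_CUT n w \<alpha>"
  then show "\<forall>x\<in>signs n. lin n w (cut_vec n x) \<le> \<alpha>"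
    using cut_vec_in_CUT unfolding valid_CUT_def by blast
next
  assume cuts: "\<forall>x\<in>signs n. lin n w (cut_vec n x) \<le> \<alpha>"
  show "valid_CUT n w \<alpha>" unfolding valid_CUT_def
  proof
    fix y assume "y \<in> CUT n"
    then obtain \<mu> where \<mu>: "sign_distr n \<mu>" and y: "y = (\<lambda>e. \<Sum>x\<in>signs n. \<mu> x * cut_vec n x e)"
      unfolding CUT_iff by blast
    have "lin n w y = (\<Sum>x\<in>signs n. \<mu> x * lin n w (cut_vec n x))"
      using y lin_sum_scaled by simp
    also have "\<dots> \<le> (\<Sum>x\<in>signs n. \<mu> x * \<alpha>)"
      using cuts \<mu> unfolding sign_distr_def by (intro sum_mono mult_left_mono) auto
    also have "\<dots> = \<alpha>" using \<mu> unfolding sign_distr_def by (simp flip: sum_distrib_right)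
    finally show "lin n w y \<le> \<alpha>" .
  qed
qed

lemma CUT_subset_Rk: "CUT n \<subseteq> Rk k n"
proof
  fix y assume y: "y \<in> CUT n"
  then have "\<forall>e. e \<notin> edges n \<longrightarrow> y e = 0" unfolding CUT_iff cut_vec_def by auto
  then show "y \<in> Rk k n" using y unfolding Rk_def valid_CUT_def by blast
qed

lemma in_Gk_no_edges: "in_Gk k m {}"
proof -
  have "proj {} ` CUT m = {\<lambda>_. 0}"
    using cut_vec_in_CUT[of "\<lambda>_. 1" m] by (auto simp: proj_def signs_def)
  moreover have "proj {} ` Rk k m = {\<lambda>_. 0}"
    using cut_vec_in_CUT[of "\<lambda>_. 1" m] CUT_subset_Rk by (force simp: proj_def signs_def)
  ultimately show ?thesis unfolding in_Gk_def by simp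
qed

text \<open>Edges collapsed by \<open>\<phi>\<close> get value 1, as for a cut vector constant on the fibres of \<open>\<phi>\<close>.\<close>

definition lift_along :: "(nat \<Rightarrow> nat) \<Rightarrow> nat \<Rightarrow> (nat set \<Rightarrow> real) \<Rightarrow> nat set \<Rightarrow> real" where
  "lift_along \<phi> n y = (\<lambda>e. if e \<in> edges n then (if card (\<phi> ` e) = 1 then 1 else y (\<phi> ` e)) else 0)"

definition push_weight :: "(nat \<Rightarrow> nat) \<Rightarrow> nat \<Rightarrow> (nat set \<Rightarrow> real) \<Rightarrow> nat set \<Rightarrow> real" where
  "push_weight \<phi> n w = (\<lambda>f. \<Sum>e\<in>{e \<in> edges n. card (\<phi> ` e) \<noteq> 1 \<and> \<phi> ` e = f}. w e)"

definition collapsed_weight :: "(nat \<Rightarrow> nat) \<Rightarrow> nat \<Rightarrow> (nat set \<Rightarrow> real) \<Rightarrow> real" where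
  "collapsed_weight \<phi> n w = (\<Sum>e\<in>{e \<in> edges n. card (\<phi> ` e) = 1}. w e)"

lemma image_edge_in_edges:
  assumes "\<forall>a. \<phi> a < m" "e \<in> edges n" "card (\<phi> ` e) \<noteq> 1"
  shows "\<phi> ` e \<in> edges m"
  using assms by (auto elim!: edgesE intro!: edgesI)

lemma lin_lift_along:
  assumes "\<forall>a. \<phi> a < m"
  shows "lin n w (lift_along \<phi> n y) = collapsed_weight \<phi> n w + lin m (push_weight \<phi> n w) y"
proof -
  let ?B = "{e \<in> edges n. card (\<phi> ` e) \<noteq> 1}"
  have "lin n w (lift_along \<phi> n y) =
      (\<Sum>e\<in>edges n. if card (\<phi> ` e) = 1 then w e else w e * y (\<phi> ` e))"
    unfolding lin_def lift_along_def by (intro sum.cong) auto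
  also have "\<dots> = collapsed_weight \<phi> n w + (\<Sum>e\<in>?B. w e * y (\<phi> ` e))"
    unfolding collapsed_weight_def
    by (subst sum.If_cases[OF finite_edges]) (auto intro!: arg_cong2[where f="(+)"] sum.cong)
  also have "(\<Sum>e\<in>?B. w e * y (\<phi> ` e)) =
      (\<Sum>f\<in>edges m. \<Sum>e\<in>{e. e \<in> ?B \<and> \<phi> ` e = f}. w e * y (\<phi> ` e))"
    by (rule sum.group[symmetric]) (use finite_edges image_edge_in_edges[OF assms] in auto)
  also have "\<dots> = lin m (push_weight \<phi> n w) y"
    unfolding lin_def push_weight_def sum_distrib_right by (intro sum.cong) auto
  finally show ?thesis .
qed

lemma lift_along_cut_vec:
  assumes "\<forall>a. \<phi> a < m" and x: "x \<in> signs m"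
  shows "lift_along \<phi> n (cut_vec m x) = cut_vec n (\<lambda>a. if a < n then x (\<phi> a) else 1)"
proof
  fix e
  show "lift_along \<phi> n (cut_vec m x) e = cut_vec n (\<lambda>a. if a < n then x (\<phi> a) else 1) e"
  proof (cases "e \<in> edges n")
    case True
    then obtain a b where ab: "e = {a, b}" "a \<noteq> b" "a < n" "b < n" by (rule edgesE)
    show ?thesis
    proof (cases "\<phi> a = \<phi> b")
      case True
      then show ?thesis using ab signs_square[OF x] unfolding lift_along_def cut_vec_def by simp
    next
      case False
      then have "\<phi> ` e \<in> edges m" using assms ab by (auto intro: edgesI)
      then show ?thesis using False ab unfolding lift_along_def cut_vec_def by simp
    qed
  qed (simp add: lift_along_def cut_vec_def)
qed

lemma valid_CUT_push_weight:
  assumes "\<forall>a. \<phi> a < m" and "valid_CUT n w \<alpha>"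
  shows "valid_CUT m (push_weight \<phi> n w) (\<alpha> - collapsed_weight \<phi> n w)"
  unfolding valid_CUT_iff_cut_vecs
proof
  fix x assume x: "x \<in> signs m"
  let ?x = "\<lambda>a. if a < n then x (\<phi> a) else 1"
  have "?x \<in> signs n" using signs_values[OF x] unfolding signs_def by auto
  then have "lin n w (cut_vec n ?x) \<le> \<alpha>" using assms(2) unfolding valid_CUT_iff_cut_vecs by blast
  then show "lin m (push_weight \<phi> n w) (cut_vec m x) \<le> \<alpha> - collapsed_weight \<phi> n w"
    using lin_lift_along[OF assms(1), of n w "cut_vec m x"] lift_along_cut_vec[OF assms(1) x, of n]
    by simp
qed

lemma support_nodes_push_weight: "support_nodes m (push_weight \<phi> n w) \<subseteq> \<phi> ` support_nodes n w"
proof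
  fix i assume "i \<in> support_nodes m (push_weight \<phi> n w)"
  then obtain f where f: "i \<in> f" "push_weight \<phi> n w f \<noteq> 0"
    unfolding support_nodes_def by auto
  then obtain e where "e \<in> edges n" "\<phi> ` e = f" "w e \<noteq> 0"
    unfolding push_weight_def by (metis (mono_tags, lifting) mem_Collect_eq sum.neutral)
  then show "i \<in> \<phi> ` support_nodes n w" using f unfolding support_nodes_def by auto
qed

lemma card_support_nodes_push_weight:
  "card (support_nodes m (push_weight \<phi> n w)) \<le> card (support_nodes n w)"
proof -
  have "card (support_nodes m (push_weight \<phi> n w)) \<le> card (\<phi> ` support_nodes n w)"
    by (intro card_mono finite_imageI finite_support_nodes support_nodes_push_weight)
  also have "\<dots> \<le> card (support_nodes n w)" by (rule card_image_le[OF finite_support_nodes])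
  finally show ?thesis .
qed

lemma lift_along_in_Rk:
  assumes "\<forall>a. \<phi> a < m" and y: "y \<in> Rk k m"
  shows "lift_along \<phi> n y \<in> Rk k n"
proof -
  have "lin n w (lift_along \<phi> n y) \<le> \<alpha>"
    if "valid_CUT n w \<alpha>" and "card (support_nodes n w) \<le> k" for w \<alpha>
  proof -
    have "lin m (push_weight \<phi> n w) y \<le> \<alpha> - collapsed_weight \<phi> n w"
      using y valid_CUT_push_weight[OF assms(1) that(1)]
        card_support_nodes_push_weight[of m \<phi> n w] that(2)
      unfolding Rk_def by fastforce
    then show ?thesis using lin_lift_along[OF assms(1)] by simp
  qed
  then show ?thesis unfolding Rk_def lift_along_def by auto
qed

lemma sign_eq_if_edge_one:
  assumes \<mu>: "sign_distr n \<mu>" and y: "y = (\<lambda>e. \<Sum>x\<in>signs n. \<mu> x * cut_vec n x e)"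
    and cd: "{c, d} \<in> edges n" "y {c, d} = 1"
    and x: "x \<in> signs n" "\<mu> x \<noteq> 0"
  shows "x c = x d"
proof -
  have le: "x' c * x' d \<le> 1" if "x' \<in> signs n" for x'
    using signs_values[OF that, of c] signs_values[OF that, of d] by auto
  have "(\<Sum>x'\<in>signs n. \<mu> x' * (1 - x' c * x' d)) = (\<Sum>x'\<in>signs n. \<mu> x') - y {c, d}"
    using y cut_vec_doubleton[OF cd(1)] by (simp add: right_diff_distrib sum_subtractf)
  also have "\<dots> = 0" using \<mu> cd(2) unfolding sign_distr_def by simp
  finally have "\<mu> x * (1 - x c * x d) = 0"
    using \<mu> le x(1) finite_signs unfolding sign_distr_def by (subst (asm) sum_nonneg_eq_0_iff) auto
  then have "x c * x d = 1" using x(2) by simp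
  then show ?thesis using signs_values[OF x(1), of c] signs_values[OF x(1), of d] by auto
qed

lemma eq_on_connected:
  assumes "connected_in E S" and "\<forall>c\<in>S. \<forall>d\<in>S. {c, d} \<in> E \<longrightarrow> f c = f d"
    and "a \<in> S" "b \<in> S"
  shows "f a = f b"
proof -
  have "(\<lambda>u v. u \<in> S \<and> v \<in> S \<and> {u, v} \<in> E)\<^sup>*\<^sup>* a b"
    using assms(1,3,4) unfolding connected_in_def by blast
  then show ?thesis by (induction rule: rtranclp_induct) (use assms(2) in auto)
qed

lemma CUT_pushforward:
  assumes \<mu>: "sign_distr n \<mu>" and r: "\<forall>x\<in>signs n. r x \<in> signs m"
  shows "(\<lambda>e. \<Sum>x\<in>signs n. \<mu> x * cut_vec m (r x) e) \<in> CUT m"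
proof -
  define \<nu> where "\<nu> x' = (\<Sum>x\<in>{x \<in> signs n. r x = x'}. \<mu> x)" for x'
  have pushforward_sum: "(\<Sum>x'\<in>signs m. \<nu> x' * g x') = (\<Sum>x\<in>signs n. \<mu> x * g (r x))" for g
  proof -
    have "(\<Sum>x'\<in>signs m. \<nu> x' * g x') =
        (\<Sum>x'\<in>signs m. \<Sum>x\<in>{x. x \<in> signs n \<and> r x = x'}. \<mu> x * g (r x))"
      unfolding \<nu>_def sum_distrib_right by (intro sum.cong) auto
    also have "\<dots> = (\<Sum>x\<in>signs n. \<mu> x * g (r x))"
      by (rule sum.group) (use finite_signs r in auto)
    finally show ?thesis .
  qed
  have "sign_distr m \<nu>"
    using \<mu> pushforward_sum[of "\<lambda>_. 1"] unfolding sign_distr_def \<nu>_def by (auto intro: sum_nonneg)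
  moreover have "(\<lambda>e. \<Sum>x\<in>signs n. \<mu> x * cut_vec m (r x) e) = (\<lambda>e. \<Sum>x'\<in>signs m. \<nu> x' * cut_vec m x' e)"
    using pushforward_sum by simp
  ultimately show ?thesis unfolding CUT_iff by blast
qed

text \<open>Value 1 on an edge forces every cut in the support of \<open>y\<close> to agree at its ends, hence to be
  constant on each connected \<open>V i\<close>; choosing a representative per branch set pushes \<open>y\<close> forward.\<close>

lemma CUT_contract:
  assumes y: "y \<in> CUT n" and E: "E \<subseteq> edges n"
    and V: "\<forall>i<m. V i \<noteq> {} \<and> connected_in E (V i)"
    and one: "\<forall>i<m. \<forall>c\<in>V i. \<forall>d\<in>V i. {c, d} \<in> E \<longrightarrow> y {c, d} = 1"
  obtains y' where "y' \<in> CUT m"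
    and "\<And>i j a b. {i, j} \<in> edges m \<Longrightarrow> a \<in> V i \<Longrightarrow> b \<in> V j \<Longrightarrow> {a, b} \<in> edges n \<Longrightarrow>
      y' {i, j} = y {a, b}"
proof -
  obtain \<mu> where \<mu>: "sign_distr n \<mu>" and y_eq: "y = (\<lambda>e. \<Sum>x\<in>signs n. \<mu> x * cut_vec n x e)"
    using y unfolding CUT_iff by blast
  define \<psi> where "\<psi> i = (SOME a. a \<in> V i)" for i
  have \<psi>: "\<psi> i \<in> V i" if "i < m" for i
    using V that unfolding \<psi>_def by (simp add: some_in_eq)
  have const: "x a = x (\<psi> i)" if "x \<in> signs n" "\<mu> x \<noteq> 0" "i < m" "a \<in> V i" for x a i
    using V one E \<psi> that
    by (intro eq_on_connected[of E "V i"]) (auto intro: sign_eq_if_edge_one[OF \<mu> y_eq])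
  define r where "r x = (\<lambda>i. if i < m then x (\<psi> i) else 1)" for x :: "nat \<Rightarrow> real"
  have "\<forall>x\<in>signs n. r x \<in> signs m"
    using signs_values unfolding r_def signs_def by auto
  then have "(\<lambda>e. \<Sum>x\<in>signs n. \<mu> x * cut_vec m (r x) e) \<in> CUT m"
    by (rule CUT_pushforward[OF \<mu>])
  moreover have "(\<Sum>x\<in>signs n. \<mu> x * cut_vec m (r x) {i, j}) = y {a, b}"
    if ij: "{i, j} \<in> edges m" and ab: "a \<in> V i" "b \<in> V j" "{a, b} \<in> edges n" for i j a b
  proof -
    have "i < m" "j < m" using ij by (auto elim!: edgesE simp: doubleton_eq_iff)
    then have "\<mu> x * cut_vec m (r x) {i, j} = \<mu> x * cut_vec n x {a, b}" if "x \<in> signs n" for x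
      using const[OF that _ _ ab(1)] const[OF that _ _ ab(2)]
      by (cases "\<mu> x = 0") (simp_all add: cut_vec_doubleton ij ab(3) r_def)
    then have "(\<Sum>x\<in>signs n. \<mu> x * cut_vec m (r x) {i, j}) = (\<Sum>x\<in>signs n. \<mu> x * cut_vec n x {a, b})"
      by (rule sum.cong[OF refl])
    then show ?thesis using y_eq by simp
  qed
  ultimately show ?thesis using that by blast
qed

lemma branch_map_exists:
  assumes "0 < m" and disjoint: "\<forall>i<m. \<forall>j<m. i \<noteq> j \<longrightarrow> V i \<inter> V j = {}"
  obtains \<phi> :: "nat \<Rightarrow> nat" where "\<forall>a. \<phi> a < m" and "\<And>i a. i < m \<Longrightarrow> a \<in> V i \<Longrightarrow> \<phi> a = i"
proof
  define \<phi> where "\<phi> a = (if \<exists>i<m. a \<in> V i then (SOME i. i < m \<and> a \<in> V i) else 0)" for a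
  show "\<forall>a. \<phi> a < m"
    using assms(1) unfolding \<phi>_def by (auto intro: someI2_ex)
  show "\<phi> a = i" if "i < m" "a \<in> V i" for i a
  proof -
    have "\<phi> a < m \<and> a \<in> V (\<phi> a)"
      using that unfolding \<phi>_def by (auto intro: someI2_ex)
    then show ?thesis using disjoint that by blast
  qed
qed

lemma proj_Rk_subset_proj_CUT_minor:
  assumes G: "in_Gk k n E" and F: "F \<subseteq> edges m"
    and V: "\<forall>i<m. V i \<noteq> {} \<and> connected_in E (V i)"
    and VF: "\<forall>i<m. \<forall>j<m. {i, j} \<in> F \<longrightarrow> (\<exists>a\<in>V i. \<exists>b\<in>V j. {a, b} \<in> E)"
    and \<phi>: "\<forall>a. \<phi> a < m" "\<And>i a. i < m \<Longrightarrow> a \<in> V i \<Longrightarrow> \<phi> a = i"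
  shows "proj F ` Rk k m \<subseteq> proj F ` CUT m"
proof
  fix p assume "p \<in> proj F ` Rk k m"
  then obtain y where y: "y \<in> Rk k m" and p: "p = proj F y" by blast
  have E: "E \<subseteq> edges n" and GR: "proj E ` CUT n = proj E ` Rk k n"
    using G unfolding in_Gk_def by auto
  obtain y0 where y0: "y0 \<in> CUT n" and "proj E y0 = proj E (lift_along \<phi> n y)"
    using lift_along_in_Rk[OF \<phi>(1) y] GR by (metis imageE image_eqI)
  then have agree: "y0 e = lift_along \<phi> n y e" if "e \<in> E" for e
    using that unfolding proj_def by meson
  have "\<forall>i<m. \<forall>c\<in>V i. \<forall>d\<in>V i. {c, d} \<in> E \<longrightarrow> y0 {c, d} = 1"
    using agree E \<phi>(2) unfolding lift_along_def by auto
  then obtain y' where y': "y' \<in> CUT m"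
    and y'_eq: "\<And>i j a b. {i, j} \<in> edges m \<Longrightarrow> a \<in> V i \<Longrightarrow> b \<in> V j \<Longrightarrow> {a, b} \<in> edges n \<Longrightarrow>
      y' {i, j} = y0 {a, b}"
    using CUT_contract[OF y0 E V] by blast
  have "y' f = y f" if f: "f \<in> F" for f
  proof -
    obtain i j where ij: "f = {i, j}" "i \<noteq> j" "i < m" "j < m"
      using f F by (auto elim!: edgesE)
    then obtain a b where ab: "a \<in> V i" "b \<in> V j" "{a, b} \<in> E" using VF f by blast
    have "\<phi> ` {a, b} = {i, j}" using \<phi>(2) ij ab by auto
    then have "lift_along \<phi> n y {a, b} = y f"
      using ab(3) E ij unfolding lift_along_def by auto
    then show ?thesis using y'_eq[of i j a b] agree[OF ab(3)] ij ab E F f by auto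
  qed
  then have "proj F y' = p" using p unfolding proj_def by auto
  then show "p \<in> proj F ` CUT m" using y' by blast
qed

theorem mainTheorem8:
  fixes k n m :: nat and E F :: "nat set set"
  assumes "2 \<le> k"
    and "in_Gk k n E"
    and "F \<subseteq> edges m"
    and "is_minor m F n E"
  shows "in_Gk k m F"
  \<comment> \<open>The argument works for every \<open>k\<close>.\<close>
proof (cases "m = 0")
  case True
  then have "F = {}" using assms(3) unfolding edges_def by auto
  then show ?thesis by (simp add: in_Gk_no_edges)
next
  case False
  obtain V where V: "\<forall>i<m. V i \<noteq> {} \<and> V i \<subseteq> {0..<n} \<and> connected_in E (V i)"
    and disjoint: "\<forall>i<m. \<forall>j<m. i \<noteq> j \<longrightarrow> V i \<inter> V j = {}"
    and VF: "\<forall>i<m. \<forall>j<m. {i, j} \<in> F \<longrightarrow> (\<exists>a\<in>V i. \<exists>b\<in>V j. {a, b} \<in> E)"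
    using assms(4) unfolding is_minor_def by blast
  obtain \<phi> where "\<forall>a. \<phi> a < m" "\<And>i a. i < m \<Longrightarrow> a \<in> V i \<Longrightarrow> \<phi> a = i"
    using branch_map_exists[OF _ disjoint] False by blast
  then have "proj F ` Rk k m \<subseteq> proj F ` CUT m"
    using proj_Rk_subset_proj_CUT_minor[OF assms(2,3) _ VF] V by blast
  then show ?thesis
    using CUT_subset_Rk[of m k] assms(3) unfolding in_Gk_def by blast
qed

end
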